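(* Let $n\ge 1$ and $N\ge 1$ be integers and $0<p<1$. In the random model described in the context, let $\mathsf{Y_{cycle}}$ denote the multiset of right vertices (reads) of the bipartite graph $\mathcal{G}$ that lie on at least one cycle of $\mathcal{G}$. Then $$P\big(|\mathsf{Y_{cycle}}|>1\big) > 1-\frac{\mathcal{U}_{\mathsf{cycle}}}{N2^n(1-\mathcal{U}_{\mathsf{cycle}})},\qquad\text{where } \mathcal{U}_{\mathsf{cycle}}=2^{-N\left((1+p^2)^n-1\right)}.$$
   Context: Model: Let $M=2^n$ and let the address set be $C=\{0,1\}^n=\{\mathbf{x}_1,\dots,\mathbf{x}_M\}$. Let $L$ be a positive integer (the data length). Data parts $\mathbf{d}_1,\dots,\mathbf{d}_M$ are drawn independently and uniformly at random from $\{0,1\}^L$; the $i$-th strand is $(\mathbf{x}_i,\mathbf{d}_i)$. Each strand is transmitted $N$ times through the binary erasure channel $\mathsf{BEC}(p)$: in each transmission every symbol is independently replaced by the erasure symbol $*$ with probability $p$ and kept otherwise, independently across transmissions and strands. The receiver obtains the unordered multiset $\mathcal{Y}$ of the $MN$ reads $(\mathbf{y},\mathbf{d}')\in\{0,1,*\}^n\times\{0,1,*\}^L$. An address $\mathbf{x}\in C$ is compatible with a read $(\mathbf{y},\mathbf{d}')$ if $\mathbf{x}$ and $\mathbf{y}$ coincide at every position where $\mathbf{y}$ is not erased. The bipartite graph $\mathcal{G}$ has left vertex set $C$, right vertex set $\mathcal{Y}$ (reads counted with multiplicity), and an edge between $\mathbf{x}$ and $(\mathbf{y},\mathbf{d}')$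 iff $\mathbf{x}$ is compatible with $(\mathbf{y},\mathbf{d}')$. *)

theory Defs
  imports "HOL-Probability.Probability"
begin

definition addrs :: "nat \<Rightarrow> bool list set" where
  "addrs n = {xs. length xs = n}"

text \<open>Reads are indexed by (strand address x, transmission number j), j < N;
  this realises the multiset of MN reads with multiplicity.\<close>
definition reads :: "nat \<Rightarrow> nat \<Rightarrow> (bool list \<times> nat) set" where
  "reads n N = addrs n \<times> {..<N}"

text \<open>An erasure pattern E: E (x, j, k) = True iff the k-th address symbol of the
  j-th transmission of strand x was erased.\<close>
type_synonym erasures = "bool list \<times> nat \<times> nat \<Rightarrow> bool"

text \<open>Received address symbol k of read r = (x, j): None = erasure symbol.\<close>
definition read_addr :: "erasures \<Rightarrow> bool list \<times> nat \<Rightarrow> nat \<Rightarrow> bool option" where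
  "read_addr E r k = (if E (fst r, snd r, k) then None else Some (fst r ! k))"

definition compatible :: "nat \<Rightarrow> erasures \<Rightarrow> bool list \<Rightarrow> bool list \<times> nat \<Rightarrow> bool" where
  "compatible n E x r = (\<forall>k<n. read_addr E r k \<noteq> None \<longrightarrow> read_addr E r k = Some (x ! k))"

definition gadj :: "nat \<Rightarrow> nat \<Rightarrow> erasures \<Rightarrow>
    (bool list + bool list \<times> nat) \<Rightarrow> (bool list + bool list \<times> nat) \<Rightarrow> bool" where
  "gadj n N E u v = (case (u, v) of
      (Inl x, Inr r) \<Rightarrow> x \<in> addrs n \<and> r \<in> reads n N \<and> compatible n E x r
    | (Inr r, Inl x) \<Rightarrow> x \<in> addrs n \<and> r \<in> reads n N \<and> compatible n E x r
    | _ \<Rightarrow> False)"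

definition is_cycle :: "('v \<Rightarrow> 'v \<Rightarrow> bool) \<Rightarrow> 'v list \<Rightarrow> bool" where
  "is_cycle adj vs = (3 \<le> length vs \<and> distinct vs \<and>
     (\<forall>i<length vs. adj (vs ! i) (vs ! ((i + 1) mod length vs))))"

definition Ycycle :: "nat \<Rightarrow> nat \<Rightarrow> erasures \<Rightarrow> (bool list \<times> nat) set" where
  "Ycycle n N E = {r \<in> reads n N. \<exists>vs. is_cycle (gadj n N E) vs \<and> Inr r \<in> set vs}"

definition erasure_pmf :: "nat \<Rightarrow> nat \<Rightarrow> real \<Rightarrow> erasures pmf" where
  "erasure_pmf n N p = Pi_pmf (addrs n \<times> {..<N} \<times> {..<n}) False (\<lambda>_. bernoulli_pmf p)"

definition U_cycle :: "nat \<Rightarrow> nat \<Rightarrow> real \<Rightarrow> real" where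
  "U_cycle n N p = 2 powr (- (real N * ((1 + p\<^sup>2) ^ n - 1)))"

end

(*
  If two of the 2N reads of the strands x and x' = x[k := True] both have their k-th address
  symbol erased, each of these reads is compatible with both x and x', so x, r1, x', r2 is a
  4-cycle of G and |Y_cycle| >= 2. The hypercube {0,1}^n has n 2^(n-1) such edges (x, x'), and
  the k-th address symbols of the reads of different edges are disjoint families of independent
  Bernoulli(p) erasures. Hence P(|Y_cycle| <= 1) <= q^(n 2^(n-1)) with
  q = P(Bin(2N, p) <= 1) = (1-p)^(2N) + 2Np(1-p)^(2N-1).

  Since U_cycle / (1 - U_cycle) = 1 / (2^(N((1+p^2)^n - 1)) - 1), what remains is the real
  inequality q^(n 2^(n-1)) N 2^n (2^(N((1+p^2)^n - 1)) - 1) < 1. It follows from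
  1 - p <= exp(-p - p^2/2), chord and tangent bounds for 2^t and y exp(-cy) <= 1/(ce), treating
  the cases n = 1 or N = 1 separately from the generic case n, N >= 2.
*)
theory Submission
  imports Defs "HOL-Analysis.Harmonic_Numbers"
begin

section \<open>Elementary estimates\<close>

lemma exp_1_gt_2718: "2718/1000 < exp (1::real)"
  using e_approx_32 by (simp add: abs_if split: if_split_asm)

lemma exp_ge_sum_taylor:
  fixes x :: real
  assumes "0 \<le> x"
  shows "(\<Sum>k<n. x^k / fact k) \<le> exp x"
proof -
  have "(\<lambda>k. x^k / fact k) sums exp x"
    using exp_converges[of x] by (simp add: scaleR_conv_of_real divide_inverse mult.commute)
  then have "summable (\<lambda>k. x^k / fact k)" and exp: "exp x = (\<Sum>k. x^k / fact k)"
    by (simp_all add: sums_iff)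
  from this(1) show ?thesis
    unfolding exp by (rule sum_le_suminf) (use assms in auto)
qed

lemma exp_8_div_3_gt: "27/2 < exp (8/3::real)"
  using exp_ge_sum_taylor[of "8/3" 9]
  by (simp add: lessThan_nat_numeral fact_numeral power_divide)

lemma exp_613_div_150_gt: "800/324 * (20/19)^2 * (600/287)^4 < exp (613/150::real)"
  using exp_ge_sum_taylor[of "613/150" 9]
  by (simp add: lessThan_nat_numeral fact_numeral power_divide)

lemma exp_minus_one_le_mult_exp:
  fixes z :: real
  assumes "0 \<le> z"
  shows "exp z - 1 \<le> z * exp z"
proof -
  have "(1 - z) * exp z \<le> exp (-z) * exp z"
    using exp_ge_add_one_self[of "-z"] by (intro mult_right_mono) auto
  then show ?thesis
    by (simp add: exp_minus field_simps)
qed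

lemma mult_exp_neg_le:
  fixes y c :: real
  assumes "0 \<le> y" "0 < c"
  shows "y * exp (- (c * y)) \<le> exp (-1) / c"
proof -
  have "c * y * exp (- (c * y)) \<le> exp (c * y - 1) * exp (- (c * y))"
    using exp_ge_add_one_self[of "c * y - 1"] by (intro mult_right_mono) auto
  also have "\<dots> = exp (-1)"
    by (simp flip: exp_add)
  finally show ?thesis
    using assms by (simp add: field_simps)
qed

lemma one_plus_mult_exp_neg_le:
  fixes u c :: real
  assumes "0 \<le> u" "0 < c"
  shows "(1 + u) * exp (- (c * u)) \<le> exp (c - 1) / c"
proof -
  have "(1 + u) * exp (- (c * (1 + u))) * exp c \<le> exp (-1) / c * exp c"
    using mult_exp_neg_le[of "1 + u" c] assms by (intro mult_right_mono) auto
  then show ?thesis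
    by (simp add: algebra_simps flip: exp_add exp_diff)
qed

lemma one_minus_le_exp_quadratic:
  fixes t :: real
  assumes "0 \<le> t"
  shows "1 - t \<le> exp (- t - t^2 / 2)"
proof -
  let ?f = "\<lambda>t::real. exp (- t - t^2 / 2) - (1 - t)"
  have "?f 0 \<le> ?f t"
  proof (rule DERIV_nonneg_imp_nondecreasing[OF assms])
    fix x :: real
    assume "0 \<le> x" "x \<le> t"
    have "1 + x \<le> exp x"
      by simp
    also have "\<dots> \<le> exp (x + x^2 / 2)"
      by simp
    finally have "(1 + x) * exp (- x - x^2 / 2) \<le> exp (x + x^2 / 2) * exp (- x - x^2 / 2)"
      by (intro mult_right_mono) auto
    then have "0 \<le> exp (- x - x^2 / 2) * (-1 - x) + 1"
      by (simp add: algebra_simps flip: exp_add)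
    moreover have "DERIV ?f x :> exp (- x - x^2 / 2) * (-1 - x) + 1"
      by (auto intro!: derivative_eq_intros simp: power2_eq_square)
    ultimately show "\<exists>y. DERIV ?f x :> y \<and> 0 \<le> y"
      by blast
  qed
  then show ?thesis
    by simp
qed

lemma one_plus_le_exp_pade:
  fixes w :: real
  assumes "0 \<le> w"
  shows "1 + w \<le> exp (w - 3 * w^2 / (6 + 4 * w))"
proof -
  let ?f = "\<lambda>w::real. w - 3 * w^2 / (6 + 4 * w) - ln (1 + w)"
  have "?f 0 \<le> ?f w"
  proof (rule DERIV_nonneg_imp_nondecreasing[OF assms])
    fix x :: real
    assume "0 \<le> x" "x \<le> w"
    define f' where "f' = 1 - (6 * x * (6 + 4 * x) - 3 * x^2 * 4) / (6 + 4 * x)^2 - 1 / (1 + x)"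
    have "DERIV ?f x :> f'"
      unfolding f'_def using \<open>0 \<le> x\<close>
      by (auto intro!: derivative_eq_intros simp: power2_eq_square)
    moreover have "1 + x \<noteq> 0" "3 + 2 * x \<noteq> 0" "6 + 4 * x \<noteq> 0"
      using \<open>0 \<le> x\<close> by auto
    then have "f' = x^3 / ((1 + x) * (3 + 2 * x)^2)"
      unfolding f'_def by (simp add: divide_simps) (simp add: algebra_simps power2_eq_square power3_eq_cube)
    then have "0 \<le> f'"
      using \<open>0 \<le> x\<close> by simp
    ultimately show "\<exists>y. DERIV ?f x :> y \<and> 0 \<le> y"
      by blast
  qed
  then have "ln (1 + w) \<le> w - 3 * w^2 / (6 + 4 * w)"
    by simp
  then have "exp (ln (1 + w)) \<le> exp (w - 3 * w^2 / (6 + 4 * w))"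
    by simp
  then show ?thesis
    using assms by simp
qed

lemma two_powr_le_chord:
  fixes a b v :: real
  assumes "a \<le> v" "v \<le> b" "a < b"
  shows "2 powr v \<le> 2 powr a + (2 powr b - 2 powr a) * (v - a) / (b - a)"
proof -
  define t where "t = (v - a) / (b - a)"
  have t: "0 \<le> t" "t \<le> 1" "t * (b - a) = v - a"
    using assms by (auto simp: t_def field_simps)
  have "(1 - t) * (a * ln 2) + t * (b * ln 2) = (a + t * (b - a)) * ln 2"
    by (simp add: algebra_simps)
  with t(3) have v: "(1 - t) * (a * ln 2) + t * (b * ln 2) = v * ln 2"
    by simp
  have "exp ((1 - t) *\<^sub>R (a * ln 2) + t *\<^sub>R (b * ln 2))
      \<le> (1 - t) * exp (a * ln 2) + t * exp (b * ln 2)"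
    using t by (intro convex_onD[OF exp_convex]) auto
  then have "2 powr v \<le> 2 powr a + (2 powr b - 2 powr a) * t"
    using v by (simp add: powr_def algebra_simps)
  then show ?thesis
    by (simp add: t_def)
qed

lemma one_plus_power_minus_one_le:
  fixes x :: real
  assumes "0 \<le> x"
  shows "(1 + x)^n - 1 \<le> n * x * (1 + x)^(n - 1)"
proof (induction n)
  case 0
  then show ?case by simp
next
  case (Suc k)
  have "(1 + x)^Suc k - 1 = (1 + x) * ((1 + x)^k - 1) + x"
    by (simp add: algebra_simps)
  also have "\<dots> \<le> (1 + x) * (k * x * (1 + x)^(k - 1)) + x * (1 + x)^k"
    using Suc.IH assms mult_left_mono[of 1 "(1 + x)^k" x] by (intro add_mono mult_left_mono) auto
  also have "\<dots> = Suc k * x * (1 + x)^(Suc k - 1)"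
    by (cases k) (simp_all add: algebra_simps)
  finally show ?case .
qed

lemma two_powr_minus_one_le:
  fixes t :: real
  assumes "0 \<le> t"
  shows "2 powr t - 1 \<le> ln 2 * t * exp (ln 2 * t)"
  using exp_minus_one_le_mult_exp[of "ln 2 * t"] assms by (simp add: powr_def mult.commute)

lemma one_minus_power_le_exp:
  fixes t :: real
  assumes "0 \<le> t" "t \<le> 1"
  shows "(1 - t)^k \<le> exp (- (k * t) - k * t^2 / 2)"
proof -
  have "(1 - t)^k \<le> exp (- t - t^2 / 2) ^ k"
    using assms one_minus_le_exp_quadratic[of t] by (intro power_mono) auto
  also have "\<dots> = exp (- (k * t) - k * t^2 / 2)"
    by (simp add: algebra_simps flip: exp_of_nat_mult)
  finally show ?thesis .
qed

section \<open>The analytic inequality\<close>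

lemma scaled_two_powr_minus_one_le:
  fixes x :: real and n N :: nat
  assumes "0 \<le> x" "1 \<le> n"
  defines "A \<equiv> real (n * 2^(n - 1))"
  shows "real N * 2^n * (2 powr (N * ((1 + x)^n - 1)) - 1)
    \<le> 2 * ln 2 * A * N^2 * x * exp ((n - 1) * x + ln 2 * N * (A * x * ((1 + x) / 2)^(n - 1)))"
proof -
  define T where "T = A * x * ((1 + x) / 2)^(n - 1)"
  have T: "T = n * x * (1 + x)^(n - 1)"
    by (simp add: T_def A_def power_divide)
  define D where "D = real N * ((1 + x)^n - 1)"
  have "0 \<le> D"
    using assms by (simp add: D_def)
  moreover have "D \<le> N * T"
    unfolding T D_def using one_plus_power_minus_one_le[OF assms(1)] by (simp add: mult_left_mono)
  ultimately have "ln 2 * D * exp (ln 2 * D) \<le> ln 2 * (N * T) * exp (ln 2 * (N * T))"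
    by (intro mult_mono) auto
  then have X: "2 powr D - 1 \<le> ln 2 * (N * T) * exp (ln 2 * (N * T))"
    using two_powr_minus_one_le[OF \<open>0 \<le> D\<close>] by linarith
  have "(1 + x)^(n - 1) \<le> exp x ^ (n - 1)"
    using assms by (intro power_mono) auto
  then have E: "(1 + x)^(n - 1) \<le> exp ((n - 1) * x)"
    using assms by (simp flip: exp_of_nat_mult)
  have "N * 2^n * (2 powr D - 1) \<le> N * 2^n * (ln 2 * (N * T) * exp (ln 2 * (N * T)))"
    using X by (intro mult_left_mono) auto
  also have "\<dots> = ln 2 * N^2 * x * (2^n * real n) * (1 + x)^(n - 1) * exp (ln 2 * (N * T))"
    unfolding T by (simp add: power2_eq_square algebra_simps)
  also have "\<dots> \<le> ln 2 * N^2 * x * (2^n * real n) * exp ((n - 1) * x) * exp (ln 2 * (N * T))"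
    using E assms(1) by (intro mult_right_mono mult_left_mono) auto
  also have "2^n * real n = 2 * A"
    using assms(2) by (cases n) (auto simp: A_def algebra_simps)
  finally show ?thesis
    by (simp add: D_def T_def exp_add algebra_simps)
qed

lemma main_ineq_n1_N1:
  fixes p :: real
  assumes "0 < p" "p < 1"
  shows "(1 - p^2) * 2 * (2 powr p^2 - 1) < 1"
proof -
  have "0 \<le> p^2" "p^2 \<le> 1"
    using assms by (auto simp: power_le_one)
  then have "2 powr p^2 - 1 \<le> p^2"
    using two_powr_le_chord[of 0 "p^2" 1] by simp
  then have "(1 - p^2) * 2 * (2 powr p^2 - 1) \<le> (1 - p^2) * 2 * p^2"
    using \<open>p^2 \<le> 1\<close> by (intro mult_left_mono) auto
  also have "\<dots> \<le> 1/2"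
    using zero_le_power2[of "2 * p^2 - 1"] by (simp add: power2_eq_square algebra_simps)
  finally show ?thesis
    by simp
qed

lemma main_ineq_n1_N2:
  fixes p :: real
  assumes "0 < p" "p < 1"
  shows "(1 - p)^3 * (1 + 3 * p) * 4 * (2 powr (2 * p^2) - 1) < 1"
proof -
  have quad: "p * (1 - p) \<le> 1/4" "(1 - p) * (1 + 3 * p) \<le> 4/3"
    "(1 - p) * (2 * p - 1) \<le> 1/8" "(1 - p) * (2 * p + 1) \<le> 9/8"
    using zero_le_power2[of "2 * p - 1"] zero_le_power2[of "3 * p - 1"]
      zero_le_power2[of "4 * p - 3"] zero_le_power2[of "4 * p - 1"]
    by (simp_all add: power2_eq_square algebra_simps)
  have nonneg: "0 \<le> 1 - p" "0 \<le> p"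
    using assms by auto
  have "2 * p^2 \<le> 2"
    using assms by (simp add: power_le_one)
  consider "2 * p^2 \<le> 1" | "1 \<le> 2 * p^2"
    by linarith
  then show ?thesis
  proof cases
    case 1
    then have "2 powr (2 * p^2) - 1 \<le> 2 * p^2"
      using two_powr_le_chord[of 0 "2 * p^2" 1] by simp
    then have "(1 - p)^3 * (1 + 3 * p) * 4 * (2 powr (2 * p^2) - 1)
        \<le> (1 - p)^3 * (1 + 3 * p) * 4 * (2 * p^2)"
      using nonneg by (intro mult_left_mono) auto
    also have "\<dots> = 8 * (p * (1 - p))^2 * ((1 - p) * (1 + 3 * p))"
      by (simp add: power2_eq_square power3_eq_cube algebra_simps)
    also have "\<dots> \<le> 8 * (1/4)^2 * (4/3)"
      using quad nonneg by (intro mult_mono power_mono) auto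
    also have "\<dots> < 1"
      by (simp add: power2_eq_square)
    finally show ?thesis .
  next
    case 2
    then have "(1/2)^2 \<le> p^2"
      by (simp add: power2_eq_square)
    then have "1/2 \<le> p"
      using nonneg power2_le_imp_le by blast
    have "2 powr (2 * p^2) \<le> 4 * p^2"
      using two_powr_le_chord[of 1 "2 * p^2" 2] 2 \<open>2 * p^2 \<le> 2\<close> by simp
    then have "(1 - p)^3 * (1 + 3 * p) * 4 * (2 powr (2 * p^2) - 1)
        \<le> (1 - p)^3 * (1 + 3 * p) * 4 * (4 * p^2 - 1)"
      using nonneg by (intro mult_left_mono) auto
    also have "\<dots> = 4 * ((1 - p) * (2 * p - 1)) * ((1 - p) * (2 * p + 1)) * ((1 - p) * (1 + 3 * p))"
      by (simp add: power2_eq_square power3_eq_cube algebra_simps)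
    also have "\<dots> \<le> 4 * (1/8) * (9/8) * (4/3)"
      using quad nonneg \<open>1/2 \<le> p\<close> by (intro mult_mono) auto
    also have "\<dots> < 1"
      by simp
    finally show ?thesis .
  qed
qed

lemma mult_cube_one_minus_le:
  fixes x :: real
  shows "x * (1 - x)^3 \<le> 27/256"
proof -
  have "27/256 - x * (1 - x)^3 = (x - 1/4)^2 * ((x - 5/4)^2 + 1/8)"
    by (simp add: power2_eq_square power3_eq_cube field_simps)
  moreover have "0 \<le> (x - 1/4)^2 * ((x - 5/4)^2 + 1/8)"
    by simp
  ultimately show ?thesis
    by linarith
qed

lemma one_minus_mult_quadratic_le:
  fixes x :: real
  assumes "0 \<le> x"
  shows "(1 - x) * (6 * x + 3 * x^2 - 2) \<le> 10/9"
proof -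
  have "10/9 - (1 - x) * (6 * x + 3 * x^2 - 2) = (x - 2/3)^2 * (7 + 3 * x)"
    by (simp add: power2_eq_square field_simps)
  moreover have "0 \<le> (x - 2/3)^2 * (7 + 3 * x)"
    using assms by simp
  ultimately show ?thesis
    by linarith
qed

lemma main_ineq_n2_N1_small:
  fixes x :: real
  assumes "0 < x" "x < 1" "2 * x + x^2 \<le> 1"
  shows "(1 - x)^4 * 4 * (2 powr (2 * x + x^2) - 1) < 1"
proof -
  have nonneg: "0 \<le> 1 - x" "0 \<le> x"
    using assms by auto
  have "x^2 \<le> 1"
    using assms by (simp add: power_le_one)
  have "x * (1 - x)^3 \<le> 27/256"
    by (rule mult_cube_one_minus_le)
  moreover have "0 \<le> (1 - x) * (2 + x)" "(1 - x) * (2 + x) \<le> 2"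
    using nonneg \<open>x^2 \<le> 1\<close> by (simp_all add: power2_eq_square algebra_simps)
  ultimately have bound: "4 * (x * (1 - x)^3) * ((1 - x) * (2 + x)) \<le> 4 * (27/256) * 2"
    by (intro mult_mono mult_left_mono) auto
  have "2 powr (2 * x + x^2) - 1 \<le> 2 * x + x^2"
    using two_powr_le_chord[of 0 "2 * x + x^2" 1] assms nonneg by simp
  then have "(1 - x)^4 * 4 * (2 powr (2 * x + x^2) - 1) \<le> (1 - x)^4 * 4 * (2 * x + x^2)"
    using nonneg by (intro mult_left_mono) auto
  also have "\<dots> = 4 * (x * (1 - x)^3) * ((1 - x) * (2 + x))"
    by (simp add: power2_eq_square power3_eq_cube power4_eq_xxxx algebra_simps)
  also have "\<dots> \<le> 4 * (27/256) * 2"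
    by (fact bound)
  also have "\<dots> < 1"
    by simp
  finally show ?thesis .
qed

lemma main_ineq_n2_N1_large:
  fixes x :: real
  assumes "0 < x" "x < 1" "1 \<le> 2 * x + x^2"
  shows "(1 - x)^4 * 4 * (2 powr (2 * x + x^2) - 1) < 1"
proof -
  have nonneg: "0 \<le> 1 - x" "0 \<le> x"
    using assms by auto
  have "x^2 \<le> 1"
    using assms by (simp add: power_le_one)
  have "2/5 \<le> x"
  proof (rule ccontr)
    assume "\<not> 2/5 \<le> x"
    then have "x^2 \<le> (2/5)^2"
      using nonneg by (intro power_mono) auto
    with assms(3) \<open>\<not> 2/5 \<le> x\<close> show False
      by (simp add: power2_eq_square)
  qed
  have "(1 - x) * (6 * x + 3 * x^2 - 2) \<le> 10/9"
    using one_minus_mult_quadratic_le[of x] nonneg by simp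
  moreover have "0 \<le> (1 - x) * (6 * x + 3 * x^2 - 2)"
    using nonneg assms(3) by simp
  moreover have "(1 - x)^3 \<le> (3/5)^3"
    using \<open>2/5 \<le> x\<close> nonneg by (intro power_mono) auto
  ultimately have bound: "4 * (1 - x)^3 * ((1 - x) * (6 * x + 3 * x^2 - 2)) \<le> 4 * (3/5)^3 * (10/9)"
    by (intro mult_mono mult_left_mono) auto
  have "2 powr (2 * x + x^2) \<le> 3 * (2 * x + x^2) - 1"
    using two_powr_le_chord[of 1 "2 * x + x^2" 3] assms \<open>x^2 \<le> 1\<close> by (simp add: field_simps)
  then have "(1 - x)^4 * 4 * (2 powr (2 * x + x^2) - 1) \<le> (1 - x)^4 * 4 * (6 * x + 3 * x^2 - 2)"
    using nonneg by (intro mult_left_mono) auto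
  also have "\<dots> = 4 * (1 - x)^3 * ((1 - x) * (6 * x + 3 * x^2 - 2))"
    by (simp add: power3_eq_cube power4_eq_xxxx algebra_simps)
  also have "\<dots> \<le> 4 * (3/5)^3 * (10/9)"
    by (fact bound)
  also have "\<dots> < 1"
    by (simp add: power3_eq_cube)
  finally show ?thesis .
qed

lemma main_ineq_n2_N1:
  fixes x :: real
  assumes "0 < x" "x < 1"
  shows "(1 - x)^4 * 4 * (2 powr (2 * x + x^2) - 1) < 1"
  using main_ineq_n2_N1_small[OF assms] main_ineq_n2_N1_large[OF assms] by linarith

lemma square_mult_one_plus_exp_neg_le:
  fixes w :: real
  assumes "0 \<le> w"
  shows "w^2 * (1 + w) * exp (- w) \<le> 27 * exp (- 8/3)"
proof -
  define e where "e = exp (- (1/3 * w))"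
  have "w * e \<le> 3 * exp (- 1)"
    using mult_exp_neg_le[of w "1/3"] assms by (simp add: e_def)
  then have "(w * e)^2 \<le> (3 * exp (- 1))^2"
    using assms by (intro power_mono) (auto simp: e_def)
  moreover have "(1 + w) * e \<le> 3 * exp (- 2/3)"
    using one_plus_mult_exp_neg_le[of w "1/3"] assms by (simp add: e_def)
  ultimately have "(w * e)^2 * ((1 + w) * e) \<le> (3 * exp (- 1))^2 * (3 * exp (- 2/3))"
    using assms by (intro mult_mono[of "(w * e)^2"]) (auto simp: e_def)
  moreover have "(w * e)^2 * ((1 + w) * e) = w^2 * (1 + w) * (e * e * e)"
    by (simp add: power2_eq_square algebra_simps)
  moreover have "e * e * e = exp (- w)"
    by (simp add: e_def flip: exp_add)
  moreover have "(3 * exp (- 1))^2 * (3 * exp (- 2/3)) = 27 * exp (- 8/3 :: real)"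
    by (simp add: power2_eq_square flip: exp_add)
  ultimately show ?thesis
    by simp
qed

lemma main_ineq_n1_N3:
  fixes p :: real and N :: nat
  assumes "3 \<le> N" "0 < p" "p < 1"
  shows "(1 - p)^(2 * N - 1) * (1 + (2 * real N - 1) * p) * (real N * 2) * (2 powr (real N * p^2) - 1) < 1"
proof -
  define M where "M = 2 * real N - 1"
  define w where "w = M * p"
  have "0 \<le> w"
    using assms by (simp add: w_def M_def)
  have "(1 - p)^(2 * N - 1) \<le> exp (- w - M * p^2 / 2)"
    using one_minus_power_le_exp[of p "2 * N - 1"] assms by (simp add: w_def M_def)
  then have Q: "(1 - p)^(2 * N - 1) * (1 + w) \<le> (1 + w) * exp (- w - M * p^2 / 2)"
    using \<open>0 \<le> w\<close> by (simp add: mult.commute mult_left_mono)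
  have X: "N * 2 * (2 powr (N * p^2) - 1) \<le> 2 * ln 2 * N^2 * p^2 * exp (ln 2 * N * p^2)"
    using scaled_two_powr_minus_one_le[of "p^2" 1 N] by simp
  have "(1 - p)^(2 * N - 1) * (1 + w) * (N * 2 * (2 powr (N * p^2) - 1))
      \<le> (1 + w) * exp (- w - M * p^2 / 2) * (2 * ln 2 * N^2 * p^2 * exp (ln 2 * N * p^2))"
    using \<open>0 \<le> w\<close> assms by (intro mult_mono[OF Q X]) (auto simp: ge_one_powr_ge_zero)
  also have "\<dots> = 2 * ln 2 * (N * p)^2 * (1 + w) * exp (- w + p^2 * (ln 2 * N - M / 2))"
    by (simp add: power2_eq_square algebra_simps flip: exp_add)
  also have "\<dots> \<le> 2 * (25/36) * (3/5 * w)^2 * (1 + w) * exp (- w)"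
  proof -
    have "ln 2 * N \<le> 25/36 * N"
      using ln2_le_25_over_36 by (intro mult_right_mono) auto
    also have "\<dots> \<le> M / 2"
      using assms by (simp add: M_def)
    finally have "exp (- w + p^2 * (ln 2 * N - M / 2)) \<le> exp (- w)"
      by (simp add: mult_nonneg_nonpos)
    moreover have "(N * p)^2 \<le> (3/5 * w)^2"
      using assms by (intro power_mono) (auto simp: w_def M_def algebra_simps)
    ultimately show ?thesis
      using \<open>0 \<le> w\<close> ln2_le_25_over_36 by (intro mult_mono) auto
  qed
  also have "\<dots> = 1/2 * (w^2 * (1 + w) * exp (- w))"
    by (simp add: power2_eq_square)
  also have "\<dots> \<le> 1/2 * (27 * exp (- 8/3))"
    using square_mult_one_plus_exp_neg_le[OF \<open>0 \<le> w\<close>] by simp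
  also have "\<dots> < 1"
    using exp_8_div_3_gt by (simp add: exp_minus field_simps)
  finally show ?thesis
    by (simp add: w_def M_def mult.assoc)
qed

lemma six_mult_pred_le: "3 \<le> n \<Longrightarrow> 6 * (n - 1) \<le> n * 2^(n - 1)"
proof (induction n rule: nat_induct_at_least)
  case base
  then show ?case by simp
next
  case (Suc n)
  have "6 * (Suc n - 1) \<le> 2 * (6 * (n - 1))"
    using Suc.hyps by simp
  also have "\<dots> \<le> Suc n * 2^(Suc n - 1)"
    using Suc.IH Suc.hyps by (cases n) simp_all
  finally show ?case .
qed

lemma four_mult_pred_le: "2 \<le> n \<Longrightarrow> 4 * (n - 1) \<le> n * 2^(n - 1)"
  using six_mult_pred_le[of n] by (cases "n = 2") auto

lemma main_ineq_n3_N1_exponent: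
  fixes x :: real and n :: nat
  assumes "3 \<le> n" "0 < x" "x < 1"
  defines "A \<equiv> real (n * 2^(n - 1))"
  shows "- (A * x) - A * x * x / 2 + (n - 1) * x + ln 2 * (A * x * ((1 + x) / 2)^(n - 1)) \<le> - (3/5 * (A * x))"
proof -
  define B where "B = A * x"
  have "0 \<le> A" "0 \<le> B"
    using assms by (simp_all add: A_def B_def)
  have "((1 + x) / 2)^(n - 1) \<le> ((1 + x) / 2)^2"
    using assms by (intro power_decreasing) auto
  then have "ln 2 * (A * x * ((1 + x) / 2)^(n - 1)) \<le> 25/36 * (A * x * ((1 + x) / 2)^2)"
    using ln2_le_25_over_36 \<open>0 \<le> A\<close> assms by (intro mult_mono mult_left_mono) auto
  also have "\<dots> = 25/144 * (B * (1 + x)^2)"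
    by (simp add: B_def power_divide)
  finally have f1: "ln 2 * (A * x * ((1 + x) / 2)^(n - 1)) \<le> 25/144 * (B * (1 + x)^2)" .
  have "real (6 * (n - 1)) \<le> A"
    unfolding A_def using six_mult_pred_le[OF assms(1)] by (simp only: of_nat_le_iff)
  then have "(n - 1) * x \<le> A / 6 * x"
    using assms by (intro mult_right_mono) auto
  then have f2: "(n - 1) * x \<le> B / 6"
    by (simp add: B_def)
  have "720 * (5/6 + x / 2 - 25/144 * (1 + x)^2 - 3/5) = 43 * (1 - x)^2 + 196 * x * (1 - x) + 28 * x^2"
    by (simp add: power2_eq_square algebra_simps)
  moreover have "0 \<le> 43 * (1 - x)^2 + 196 * x * (1 - x) + 28 * x^2"
    using assms by simp
  ultimately have "0 \<le> B * (5/6 + x / 2 - 25/144 * (1 + x)^2 - 3/5)"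
    using \<open>0 \<le> B\<close> by (simp add: zero_le_mult_iff)
  then have f3: "0 \<le> 5/6 * B + (B * x) / 2 - 25/144 * (B * (1 + x)^2) - 3/5 * B"
    by (simp add: algebra_simps)
  show ?thesis
    using f1 f2 f3 by (simp add: B_def)
qed

lemma main_ineq_n3_N1:
  fixes x :: real and n :: nat
  assumes "3 \<le> n" "0 < x" "x < 1"
  shows "(1 - x)^(n * 2^(n - 1)) * 2^n * (2 powr ((1 + x)^n - 1) - 1) < 1"
proof -
  define A where "A = real (n * 2^(n - 1))"
  define B where "B = A * x"
  define E where "E = (n - 1) * x + ln 2 * (A * x * ((1 + x) / 2)^(n - 1))"
  have "0 \<le> B"
    using assms by (simp add: A_def B_def)
  have P: "(1 - x)^(n * 2^(n - 1)) \<le> exp (- B - B * x / 2)"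
    using one_minus_power_le_exp[of x "n * 2^(n - 1)"] assms
    by (simp add: A_def B_def power2_eq_square mult.assoc)
  have R: "2^n * (2 powr ((1 + x)^n - 1) - 1) \<le> 2 * ln 2 * B * exp E"
    using scaled_two_powr_minus_one_le[of x n 1] assms by (simp add: A_def B_def E_def mult.assoc)
  have "0 \<le> 2 powr ((1 + x)^n - 1) - 1"
    using assms by (simp add: ge_one_powr_ge_zero)
  then have "(1 - x)^(n * 2^(n - 1)) * (2^n * (2 powr ((1 + x)^n - 1) - 1))
      \<le> exp (- B - B * x / 2) * (2 * ln 2 * B * exp E)"
    using assms by (intro mult_mono[OF P R]) auto
  also have "\<dots> = 2 * ln 2 * (B * exp (- B - B * x / 2 + E))"
    by (simp add: exp_add mult_ac)
  also have "\<dots> \<le> 2 * ln 2 * (B * exp (- (3/5 * B)))"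
    using main_ineq_n3_N1_exponent[OF assms] \<open>0 \<le> B\<close>
    by (intro mult_left_mono) (auto simp: A_def B_def E_def algebra_simps)
  also have "\<dots> \<le> 2 * ln 2 * (exp (- 1) / (3/5))"
    using mult_exp_neg_le[OF \<open>0 \<le> B\<close>, of "3/5"] by (intro mult_left_mono) auto
  also have "\<dots> \<le> 2 * (25/36) * (exp (- 1) / (3/5))"
    using ln2_le_25_over_36 by (intro mult_right_mono) auto
  also have "\<dots> < 1"
    using exp_1_gt_2718 by (simp add: exp_minus field_simps)
  finally show ?thesis
    by (simp add: mult.assoc)
qed

lemma mult_power_le_of_le_exp:
  fixes r :: real
  assumes "0 < r" "r \<le> exp (- 1/4)" "4 \<le> a"
  shows "a * r^a \<le> 4 * r^4"
proof -
  obtain k where k: "a = 4 + k"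
    using le_Suc_ex[OF assms(3)] by blast
  have "r^k \<le> exp (- 1/4) ^ k"
    using assms by (intro power_mono) auto
  also have "\<dots> = exp (k * (- 1/4))"
    by (rule exp_of_nat_mult[symmetric])
  finally have "(1 + k / 4) * r^k \<le> exp (k / 4) * exp (k * (- 1/4))"
    using exp_ge_add_one_self[of "k / 4"] assms(1) by (intro mult_mono) auto
  also have "\<dots> = 1"
    by (simp flip: exp_add)
  finally have "(4 + k) * r^k \<le> 4"
    by (simp add: field_simps)
  then have "(4 + k) * r^k * r^4 \<le> 4 * r^4"
    using assms(1) by (intro mult_right_mono) auto
  then show ?thesis
    by (simp add: k power_add mult_ac)
qed

lemma square_mult_power4_exp_neg_lt:
  fixes w :: real
  assumes "0 \<le> w"
  shows "800/324 * (w^2 * (1 + w)^4 * exp (- (286/75 * w))) < 1"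
proof -
  define e1 e2 where "e1 = exp (- (19/20 * w))" and "e2 = exp (- (287/600 * w))"
  have "w * e1 \<le> exp (- 1) / (19/20)"
    unfolding e1_def by (rule mult_exp_neg_le) (use assms in auto)
  then have "(w * e1)^2 \<le> (20/19 * exp (- 1))^2"
    using assms by (intro power_mono) (auto simp: e1_def)
  moreover have "(1 + w) * e2 \<le> exp (287/600 - 1) / (287/600)"
    unfolding e2_def by (rule one_plus_mult_exp_neg_le) (use assms in auto)
  then have "((1 + w) * e2)^4 \<le> (600/287 * exp (- 313/600))^4"
    using assms by (intro power_mono) (auto simp: e2_def)
  ultimately have bound: "(w * e1)^2 * ((1 + w) * e2)^4 \<le> (20/19 * exp (- 1))^2 * (600/287 * exp (- 313/600))^4"
    using assms by (intro mult_mono[of "(w * e1)^2"]) (auto simp: e1_def e2_def)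
  have "e1 * e1 * e2 * e2 * e2 * e2 = exp (- (286/75 * w))"
    by (simp add: e1_def e2_def flip: exp_add)
  then have "w^2 * (1 + w)^4 * exp (- (286/75 * w)) = (w * e1)^2 * ((1 + w) * e2)^4"
    by (simp add: power2_eq_square power4_eq_xxxx mult_ac)
  also have "\<dots> \<le> (20/19 * exp (- 1))^2 * (600/287 * exp (- 313/600))^4"
    by (fact bound)
  also have "\<dots> = (20/19)^2 * (600/287)^4 * (exp (- 1)^2 * exp (- 313/600)^4)"
    by (simp only: power_mult_distrib mult_ac)
  also have "exp (- 1)^2 * exp (- 313/600)^4 = exp (- 613/150 :: real)"
    by (simp flip: exp_of_nat_mult exp_add)
  finally have "800/324 * (w^2 * (1 + w)^4 * exp (- (286/75 * w)))
      \<le> 800/324 * ((20/19)^2 * (600/287)^4 * exp (- 613/150 :: real))"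
    by (rule mult_left_mono) simp
  also have "\<dots> < 1"
    using exp_613_div_150_gt by (simp add: exp_minus field_simps)
  finally show ?thesis .
qed

(* In the application w = (2N - 1) p, x = p^2, y = N^2 p^2 and a = n 2^(n-1). *)

lemma main_ineq_tail_small_w:
  fixes w x y :: real and a :: nat
  assumes "0 \<le> w" "w \<le> 3/2" "0 \<le> x" "x \<le> w^2 / 9" "0 \<le> y" "y \<le> 4/9 * w^2"
  shows "2 * ln 2 * (a * y) * ((1 + w)^a * exp (- (a * w) + 7/50 * (a * x))) < 1"
proof -
  define B where "B = a * w^2"
  have "0 \<le> B"
    by (simp add: B_def)
  have "(1 + w)^a \<le> exp (w - 3 * w^2 / (6 + 4 * w)) ^ a"
    using assms by (intro power_mono one_plus_le_exp_pade) auto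
  also have "\<dots> = exp (a * (w - 3 * w^2 / (6 + 4 * w)))"
    by (rule exp_of_nat_mult[symmetric])
  finally have "(1 + w)^a * exp (- (a * w) + 7/50 * (a * x))
      \<le> exp (a * (w - 3 * w^2 / (6 + 4 * w))) * exp (- (a * w) + 7/50 * (a * x))"
    by (rule mult_right_mono) simp
  also have "\<dots> = exp (- (a * (3 * w^2 / (6 + 4 * w) - 7/50 * x)))"
    by (simp add: algebra_simps flip: exp_add)
  also have "\<dots> \<le> exp (- (211/900 * B))"
  proof -
    have "3 * w^2 / 12 \<le> 3 * w^2 / (6 + 4 * w)"
      using assms by (intro divide_left_mono) auto
    then have "211/900 * w^2 \<le> 3 * w^2 / (6 + 4 * w) - 7/50 * x"
      using assms by linarith
    then have "a * (211/900 * w^2) \<le> a * (3 * w^2 / (6 + 4 * w) - 7/50 * x)"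
      by (rule mult_left_mono) simp
    then show ?thesis
      by (simp add: B_def mult_ac)
  qed
  finally have H: "(1 + w)^a * exp (- (a * w) + 7/50 * (a * x)) \<le> exp (- (211/900 * B))" .
  have "a * y \<le> a * (4/9 * w^2)"
    using assms by (intro mult_left_mono) auto
  also have "\<dots> = 4/9 * B"
    by (simp add: B_def)
  finally have "2 * ln 2 * (a * y) \<le> 2 * ln 2 * (4/9 * B)"
    by (rule mult_left_mono) simp
  then have "2 * ln 2 * (a * y) * ((1 + w)^a * exp (- (a * w) + 7/50 * (a * x)))
      \<le> 2 * ln 2 * (4/9 * B) * exp (- (211/900 * B))"
    by (rule mult_mono[OF _ H]) (use \<open>0 \<le> B\<close> assms in auto)
  also have "\<dots> = 8/9 * ln 2 * (B * exp (- (211/900 * B)))"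
    by simp
  also have "\<dots> \<le> 8/9 * (25/36) * (exp (- 1) / (211/900))"
    using mult_exp_neg_le[OF \<open>0 \<le> B\<close>, of "211/900"] ln2_le_25_over_36 \<open>0 \<le> B\<close>
    by (intro mult_mono) auto
  also have "\<dots> < 1"
    using exp_1_gt_2718 by (simp add: exp_minus field_simps)
  finally show ?thesis .
qed

lemma one_plus_exp_le_exp_neg_quarter:
  fixes w x :: real
  assumes "3/2 < w" "x \<le> w / 3"
  shows "(1 + w) * exp (- w + 7/50 * x) \<le> exp (- 1/4)"
proof -
  have "(1 + w) * exp (- w + 7/50 * x) \<le> exp (w - 3 * w^2 / (6 + 4 * w)) * exp (- w + 7/50 * x)"
    using one_plus_le_exp_pade[of w] assms by (intro mult_right_mono) auto
  also have "\<dots> = exp (- (3 * w^2 / (6 + 4 * w) - 7/50 * x))"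
    by (simp flip: exp_add)
  also have "\<dots> \<le> exp (- 1/4)"
  proof -
    have "0 \<le> w * (w - 3/2)"
      using assms by simp
    moreover have "3 * w^2 - (1/4 + 7/150 * w) * (6 + 4 * w) = 211/75 * (w * (w - 3/2)) + 147/50 * w - 3/2"
      by (simp add: power2_eq_square field_simps)
    ultimately have "(1/4 + 7/150 * w) * (6 + 4 * w) \<le> 3 * w^2"
      using assms by linarith
    then have "1/4 + 7/150 * w \<le> 3 * w^2 / (6 + 4 * w)"
      using assms by (simp add: pos_le_divide_eq)
    then show ?thesis
      using assms by simp
  qed
  finally show ?thesis .
qed

lemma main_ineq_tail_large_w:
  fixes w x y :: real and a :: nat
  assumes "3/2 < w" "0 \<le> x" "x \<le> w / 3" "0 \<le> y" "y \<le> 4/9 * w^2" "4 \<le> a"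
  shows "2 * ln 2 * (a * y) * ((1 + w)^a * exp (- (a * w) + 7/50 * (a * x))) < 1"
proof -
  define r where "r = (1 + w) * exp (- w + 7/50 * x)"
  have "0 < r"
    using assms by (simp add: r_def)
  have "r^a = (1 + w)^a * exp (- w + 7/50 * x) ^ a"
    by (simp only: r_def power_mult_distrib)
  also have "exp (- w + 7/50 * x) ^ a = exp (- (a * w) + 7/50 * (a * x))"
    by (simp add: algebra_simps flip: exp_of_nat_mult)
  finally have H: "(1 + w)^a * exp (- (a * w) + 7/50 * (a * x)) = r^a" ..
  have "a * r^a \<le> 4 * r^4"
    using one_plus_exp_le_exp_neg_quarter[of w x] \<open>0 < r\<close> assms
    by (intro mult_power_le_of_le_exp) (auto simp: r_def)
  have "r^4 = (1 + w)^4 * exp (4 * (- w + 7/50 * x))"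
    by (simp add: r_def power_mult_distrib flip: exp_of_nat_mult)
  also have "\<dots> \<le> (1 + w)^4 * exp (- (286/75 * w))"
    using assms by (intro mult_left_mono) auto
  finally have r4: "r^4 \<le> (1 + w)^4 * exp (- (286/75 * w))" .
  have "2 * ln 2 * (a * y) * r^a = 2 * ln 2 * y * (a * r^a)"
    by simp
  also have "\<dots> \<le> 2 * (25/36) * (4/9 * w^2) * (4 * r^4)"
  proof (rule mult_mono)
    show "2 * ln 2 * y \<le> 2 * (25/36) * (4/9 * w^2)"
      using ln2_le_25_over_36 assms by (intro mult_mono) auto
  qed (use \<open>a * r^a \<le> 4 * r^4\<close> \<open>0 < r\<close> assms in auto)
  also have "\<dots> \<le> 800/324 * (w^2 * ((1 + w)^4 * exp (- (286/75 * w))))"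
    using r4 by (simp add: mult_left_mono)
  also have "\<dots> < 1"
    using square_mult_power4_exp_neg_lt[of w] assms by (simp add: mult.assoc)
  finally show ?thesis
    unfolding H .
qed

lemma main_ineq_n2_N2_exponent:
  fixes x :: real and n N :: nat
  assumes "2 \<le> n" "2 \<le> N" "0 \<le> x" "x \<le> 1"
  defines "a \<equiv> real (n * 2^(n - 1))"
  shows "(n - 1) * x + ln 2 * N * (a * x * ((1 + x) / 2)^(n - 1)) \<le> (N - 1/2 + 7/50) * (a * x)"
proof -
  define B where "B = a * x"
  have "0 \<le> B"
    using assms by (simp add: a_def B_def)
  have "((1 + x) / 2)^(n - 1) \<le> 1"
    using assms by (intro power_le_one) auto
  then have "B * ((1 + x) / 2)^(n - 1) \<le> B"
    using \<open>0 \<le> B\<close> by (intro mult_left_le) auto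
  moreover have "ln 2 * N \<le> 25/36 * N"
    using ln2_le_25_over_36 by (intro mult_right_mono) auto
  ultimately have "ln 2 * N * (B * ((1 + x) / 2)^(n - 1)) \<le> 25/36 * N * B"
    using \<open>0 \<le> B\<close> assms by (intro mult_mono[of "ln 2 * N"]) auto
  moreover have "real (4 * (n - 1)) \<le> a"
    unfolding a_def using four_mult_pred_le[OF assms(1)] by (simp only: of_nat_le_iff)
  then have "(n - 1) * x \<le> a / 4 * x"
    using assms by (intro mult_right_mono) auto
  moreover have "2 * B \<le> N * B"
    using assms \<open>0 \<le> B\<close> by (intro mult_right_mono) auto
  moreover have "a / 4 * x = B / 4" "25/36 * N * B = 25/36 * (N * B)"
    "(N - 1/2 + 7/50) * B = N * B - B / 2 + 7/50 * B"
    by (simp_all add: B_def field_simps)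
  ultimately show ?thesis
    unfolding B_def[symmetric] using \<open>0 \<le> B\<close> by linarith
qed

lemma main_ineq_n2_N2_le_tail:
  fixes p :: real and n N :: nat
  assumes "2 \<le> n" "2 \<le> N" "0 < p" "p < 1"
  defines "w \<equiv> (2 * real N - 1) * p" and "a \<equiv> n * 2^(n - 1)"
  shows "((1 - p)^(2 * N - 1) * (1 + w))^a * (real N * 2^n) * (2 powr (real N * ((1 + p^2)^n - 1)) - 1)
    \<le> 2 * ln 2 * (a * (N^2 * p^2)) * ((1 + w)^a * exp (- (a * w) + 7/50 * (a * p^2)))"
proof -
  define M where "M = 2 * real N - 1"
  define x where "x = p^2"
  define E where "E = (n - 1) * x + ln 2 * N * (a * x * ((1 + x) / 2)^(n - 1))"
  have "0 \<le> w" "0 \<le> x" "x \<le> 1"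
    using assms by (auto simp: w_def x_def power_le_one)
  have "(1 - p)^(2 * N - 1) * (1 + w) \<le> (1 + w) * exp (- w - M * x / 2)"
    using one_minus_power_le_exp[of p "2 * N - 1"] assms \<open>0 \<le> w\<close>
    by (simp add: w_def M_def x_def mult.commute mult_left_mono)
  then have "((1 - p)^(2 * N - 1) * (1 + w))^a \<le> ((1 + w) * exp (- w - M * x / 2))^a"
    using assms \<open>0 \<le> w\<close> by (intro power_mono) auto
  also have "\<dots> = (1 + w)^a * exp (- w - M * x / 2) ^ a"
    by (simp only: power_mult_distrib)
  also have "exp (- w - M * x / 2) ^ a = exp (- (a * w) - a * M * x / 2)"
    by (simp add: algebra_simps flip: exp_of_nat_mult)
  finally have Q: "((1 - p)^(2 * N - 1) * (1 + w))^a \<le> (1 + w)^a * exp (- (a * w) - a * M * x / 2)" .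
  have X: "N * 2^n * (2 powr (N * ((1 + x)^n - 1)) - 1) \<le> 2 * ln 2 * a * N^2 * x * exp E"
    using scaled_two_powr_minus_one_le[of x n N] assms \<open>0 \<le> x\<close> by (simp add: a_def E_def)
  have "0 \<le> 2 powr (N * ((1 + x)^n - 1)) - 1"
    using \<open>0 \<le> x\<close> by (simp add: ge_one_powr_ge_zero)
  then have "((1 - p)^(2 * N - 1) * (1 + w))^a * (N * 2^n * (2 powr (N * ((1 + x)^n - 1)) - 1))
      \<le> (1 + w)^a * exp (- (a * w) - a * M * x / 2) * (2 * ln 2 * a * N^2 * x * exp E)"
    using \<open>0 \<le> w\<close> by (intro mult_mono[OF Q X]) auto
  also have "\<dots> = 2 * ln 2 * (a * (N^2 * x)) * ((1 + w)^a * exp (- (a * w) - a * M * x / 2 + E))"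
    by (simp add: exp_add mult_ac)
  also have "\<dots> \<le> 2 * ln 2 * (a * (N^2 * x)) * ((1 + w)^a * exp (- (a * w) + 7/50 * (a * x)))"
  proof -
    have "a * M * x / 2 = (N - 1/2) * (a * x)"
      "(N - 1/2 + 7/50) * (a * x) = (N - 1/2) * (a * x) + 7/50 * (a * x)"
      by (simp_all add: M_def field_simps)
    then have "- (a * w) - a * M * x / 2 + E \<le> - (a * w) + 7/50 * (a * x)"
      using main_ineq_n2_N2_exponent[of n N x] assms \<open>0 \<le> x\<close> \<open>x \<le> 1\<close>
      unfolding E_def a_def by linarith
    then show ?thesis
      using \<open>0 \<le> w\<close> \<open>0 \<le> x\<close> by (intro mult_left_mono) auto
  qed
  finally show ?thesis
    by (simp add: x_def mult_ac)
qed

lemma main_ineq_n2_N2: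
  fixes p :: real and n N :: nat
  assumes "2 \<le> n" "2 \<le> N" "0 < p" "p < 1"
  shows "((1 - p)^(2 * N - 1) * (1 + (2 * real N - 1) * p))^(n * 2^(n - 1)) * (real N * 2^n)
    * (2 powr (real N * ((1 + p^2)^n - 1)) - 1) < 1"
proof -
  define w where "w = (2 * real N - 1) * p"
  define a where "a = n * 2^(n - 1)"
  have "0 \<le> w" "3 * p \<le> w"
    using assms by (simp_all add: w_def mult_right_mono)
  then have "(3 * p)^2 \<le> w^2"
    using assms by (intro power_mono) auto
  then have "p^2 \<le> w^2 / 9"
    by (simp add: power_mult_distrib)
  have "p * p \<le> p * 1"
    using assms by (intro mult_left_mono) auto
  then have "p^2 \<le> w / 3"
    using \<open>3 * p \<le> w\<close> by (simp add: power2_eq_square)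
  have "N * p \<le> 2/3 * w"
    using assms by (simp add: w_def algebra_simps)
  then have "(N * p)^2 \<le> (2/3 * w)^2"
    using assms by (intro power_mono) auto
  also have "(2/3 * w)^2 = 4/9 * w^2"
    by (simp add: power2_eq_square)
  finally have Np: "N^2 * p^2 \<le> 4/9 * w^2"
    by (simp add: power_mult_distrib)
  have "4 \<le> a"
    using four_mult_pred_le[OF assms(1)] assms(1) unfolding a_def by linarith
  have "2 * ln 2 * (a * (N^2 * p^2)) * ((1 + w)^a * exp (- (a * w) + 7/50 * (a * p^2))) < 1"
  proof (cases "w \<le> 3/2")
    case True
    then show ?thesis
      using main_ineq_tail_small_w[of w "p^2" "N^2 * p^2" a] \<open>0 \<le> w\<close> \<open>p^2 \<le> w^2 / 9\<close> Np
      by simp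
  next
    case False
    then show ?thesis
      using main_ineq_tail_large_w[of w "p^2" "N^2 * p^2" a] \<open>p^2 \<le> w / 3\<close> Np \<open>4 \<le> a\<close>
      by simp
  qed
  then show ?thesis
    using main_ineq_n2_N2_le_tail[OF assms] unfolding w_def a_def by linarith
qed

lemma main_ineq:
  fixes p :: real and n N :: nat
  assumes "1 \<le> n" "1 \<le> N" "0 < p" "p < 1"
  shows "((1 - p)^(2 * N) + 2 * real N * p * (1 - p)^(2 * N - 1))^(n * 2^(n - 1)) * (real N * 2^n)
    * (2 powr (N * ((1 + p^2)^n - 1)) - 1) < 1"
proof -
  have "(1 - p)^(2 * N) = (1 - p) * (1 - p)^(2 * N - 1)"
    using assms(2) by (simp flip: power_Suc)
  then have q: "(1 - p)^(2 * N) + 2 * real N * p * (1 - p)^(2 * N - 1)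
      = (1 - p)^(2 * N - 1) * (1 + (2 * real N - 1) * p)"
    by (simp add: algebra_simps)
  have x: "0 < p^2" "p^2 < 1"
    using assms by (auto simp: power_less_one_iff)
  consider "n = 1" "N = 1" | "n = 1" "N = 2" | "n = 1" "3 \<le> N" | "n = 2" "N = 1"
    | "3 \<le> n" "N = 1" | "2 \<le> n" "2 \<le> N"
    using assms by linarith
  then show ?thesis
  proof cases
    case 1
    then show ?thesis
      unfolding q using main_ineq_n1_N1[OF assms(3,4)] by (simp add: power2_eq_square algebra_simps)
  next
    case 2
    then show ?thesis
      unfolding q using main_ineq_n1_N2[OF assms(3,4)] by (simp add: mult_ac)
  next
    case 3
    then show ?thesis
      unfolding q using main_ineq_n1_N3[OF _ assms(3,4)] by (simp add: mult_ac)
  next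
    case 4
    moreover have "(1 - p) * (1 + p) = 1 - p^2" "(1 + p^2)^2 - 1 = 2 * p^2 + (p^2)^2"
      by (simp_all add: power2_eq_square algebra_simps)
    ultimately show ?thesis
      unfolding q using main_ineq_n2_N1[OF x] by simp
  next
    case 5
    moreover have "(1 - p) * (1 + p) = 1 - p^2"
      by (simp add: power2_eq_square algebra_simps)
    ultimately show ?thesis
      unfolding q using main_ineq_n3_N1[OF _ x, of n] by simp
  next
    case 6
    then show ?thesis
      unfolding q using main_ineq_n2_N2[OF _ _ assms(3,4)] by simp
  qed
qed

lemma main_ineq_U_cycle:
  fixes p :: real and n N :: nat
  assumes "1 \<le> n" "1 \<le> N" "0 < p" "p < 1"
  shows "((1 - p)^(2 * N) + 2 * real N * p * (1 - p)^(2 * N - 1))^(n * 2^(n - 1))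
    < U_cycle n N p / (real N * 2^n * (1 - U_cycle n N p))"
proof -
  define c where "c = ((1 - p)^(2 * N) + 2 * real N * p * (1 - p)^(2 * N - 1))^(n * 2^(n - 1)) * (real N * 2^n)"
  define U where "U = U_cycle n N p"
  have "1 < (1 + p^2)^n"
    using assms by (intro one_less_power) auto
  then have "0 < real N * ((1 + p^2)^n - 1)"
    using assms by simp
  then have "1 < 2 powr (real N * ((1 + p^2)^n - 1))"
    by simp
  moreover have "U = inverse (2 powr (real N * ((1 + p^2)^n - 1)))"
    by (simp add: U_def U_cycle_def powr_minus)
  ultimately have U: "0 < U" "U < 1" "2 powr (real N * ((1 + p^2)^n - 1)) = inverse U"
    by (simp_all add: inverse_less_1_iff)
  have "c * (inverse U - 1) < 1"
    using main_ineq[OF assms] U(3) by (simp add: c_def)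
  then have "c * (1 - U) < U"
    using U(1) by (simp add: field_simps)
  then show ?thesis
    using U(2) assms by (simp add: c_def U_def[symmetric] pos_less_divide_eq mult.assoc)
qed

section \<open>Edges of the hypercube of addresses\<close>

(* (x, k) stands for the edge between x and x[k := True]; its symbols are the k-th address
   symbols of the 2N transmissions of both endpoints. *)

definition cube_edges :: "nat \<Rightarrow> (bool list \<times> nat) set" where
  "cube_edges n = {(x, k). x \<in> addrs n \<and> k < n \<and> \<not> x ! k}"

definition edge_symbols :: "nat \<Rightarrow> bool list \<times> nat \<Rightarrow> (bool list \<times> nat \<times> nat) set" where
  "edge_symbols N e = {fst e, (fst e)[snd e := True]} \<times> {..<N} \<times> {snd e}"

lemma finite_addrs: "finite (addrs n)"
  using finite_lists_length_eq[of "UNIV :: bool set" n] by (simp add: addrs_def)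

lemma card_addrs: "card (addrs n) = 2^n"
  using card_lists_length_eq[of "UNIV :: bool set" n] by (simp add: addrs_def)

lemma list_update_nth_eq_id: "xs ! k = b \<Longrightarrow> xs[k := b] = xs"
  by (metis list_update_id)

lemma card_addrs_nth_False:
  assumes "k < n"
  shows "card {x \<in> addrs n. \<not> x ! k} = 2^(n - 1)"
proof -
  let ?A0 = "{x \<in> addrs n. \<not> x ! k}" and ?A1 = "{x \<in> addrs n. x ! k}"
  have "bij_betw (\<lambda>x. x[k := True]) ?A0 ?A1"
  proof (rule bij_betwI[where g = "\<lambda>x. x[k := False]"])
    show "(\<lambda>x. x[k := True]) \<in> ?A0 \<rightarrow> ?A1" "(\<lambda>x. x[k := False]) \<in> ?A1 \<rightarrow> ?A0"
      using assms by (auto simp: addrs_def)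
    show "(x[k := True])[k := False] = x" if "x \<in> ?A0" for x
      using that by (simp add: list_update_nth_eq_id)
    show "(x[k := False])[k := True] = x" if "x \<in> ?A1" for x
      using that by (simp add: list_update_nth_eq_id)
  qed
  then have "card ?A0 = card ?A1"
    by (rule bij_betw_same_card)
  moreover have "card (?A0 \<union> ?A1) = card ?A0 + card ?A1"
    using finite_addrs by (intro card_Un_disjoint) auto
  moreover have "?A0 \<union> ?A1 = addrs n"
    by auto
  moreover have "(2::nat)^n = 2 * 2^(n - 1)"
    using assms by (cases n) auto
  ultimately show ?thesis
    using card_addrs[of n] by simp
qed

lemma finite_edge_symbols: "finite (edge_symbols N e)"
  by (simp add: edge_symbols_def)

lemma finite_cube_edges: "finite (cube_edges n)"
  by (rule finite_subset[where B = "addrs n \<times> {..<n}"]) (auto simp: cube_edges_def finite_addrs)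

lemma card_cube_edges:
  assumes "1 \<le> n"
  shows "card (cube_edges n) = n * 2^(n - 1)"
proof -
  have "cube_edges n = (\<lambda>(k, x). (x, k)) ` (SIGMA k:{..<n}. {x \<in> addrs n. \<not> x ! k})"
    by (auto simp: cube_edges_def image_iff)
  moreover have "inj_on (\<lambda>(k, x). (x, k)) (SIGMA k:{..<n}. {x \<in> addrs n. \<not> x ! k})"
    by (auto simp: inj_on_def)
  ultimately have "card (cube_edges n) = card (SIGMA k:{..<n}. {x \<in> addrs n. \<not> x ! k})"
    by (simp add: card_image)
  also have "\<dots> = (\<Sum>k<n. card {x \<in> addrs n. \<not> x ! k})"
    using finite_addrs by (intro card_SigmaI) auto
  also have "\<dots> = (\<Sum>k<n. 2^(n - 1))"
    by (intro sum.cong) (auto simp: card_addrs_nth_False)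
  finally show ?thesis
    by simp
qed

lemma card_edge_symbols:
  assumes "e \<in> cube_edges n"
  shows "card (edge_symbols N e) = 2 * N"
proof -
  obtain x k where e: "e = (x, k)" "k < length x" "\<not> x ! k"
    using assms by (auto simp: cube_edges_def addrs_def)
  then have "x \<noteq> x[k := True]"
    by (metis nth_list_update_eq)
  then show ?thesis
    by (simp add: edge_symbols_def e card_cartesian_product)
qed

lemma UN_edge_symbols: "(\<Union>e\<in>cube_edges n. edge_symbols N e) = addrs n \<times> {..<N} \<times> {..<n}"
proof (intro equalityI subsetI)
  fix i
  assume "i \<in> addrs n \<times> {..<N} \<times> {..<n}"
  then obtain y j k where i: "i = (y, j, k)" "y \<in> addrs n" "j < N" "k < n"
    by auto
  then have "(y[k := False], k) \<in> cube_edges n"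
    by (auto simp: cube_edges_def addrs_def)
  moreover have "i \<in> edge_symbols N (y[k := False], k)"
    using i by (cases "y ! k") (auto simp: edge_symbols_def list_update_nth_eq_id)
  ultimately show "i \<in> (\<Union>e\<in>cube_edges n. edge_symbols N e)"
    by blast
qed (auto simp: edge_symbols_def cube_edges_def addrs_def)

lemma cube_edge_of_edge_symbol:
  assumes "e \<in> cube_edges n" "(y, j, k) \<in> edge_symbols N e"
  shows "e = (y[k := False], k)"
  using assms by (auto simp: edge_symbols_def cube_edges_def list_update_nth_eq_id)

lemma disjoint_edge_symbols: "disjoint_family_on (edge_symbols N) (cube_edges n)"
  unfolding disjoint_family_on_def
proof (intro ballI impI)
  fix e e'
  assume e: "e \<in> cube_edges n" "e' \<in> cube_edges n" "e \<noteq> e'"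
  show "edge_symbols N e \<inter> edge_symbols N e' = {}"
  proof (rule ccontr)
    assume "edge_symbols N e \<inter> edge_symbols N e' \<noteq> {}"
    then obtain y j k where "(y, j, k) \<in> edge_symbols N e" "(y, j, k) \<in> edge_symbols N e'"
      by (metis disjoint_iff prod_cases3)
    with e show False
      using cube_edge_of_edge_symbol by metis
  qed
qed

section \<open>Four-cycles\<close>

lemma is_cycle_4:
  assumes "distinct [a, b, c, d]" "adj a b" "adj b c" "adj c d" "adj d a"
  shows "is_cycle adj [a, b, c, d]"
proof -
  have "adj ([a, b, c, d] ! i) ([a, b, c, d] ! ((i + 1) mod 4))" if "i < 4" for i
  proof -
    have "i = 0 \<or> i = 1 \<or> i = 2 \<or> i = 3"
      using that by arith
    then show ?thesis
      using assms by auto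
  qed
  then show ?thesis
    using assms(1) by (simp add: is_cycle_def)
qed

lemma compatible_if_erased:
  assumes "E (y, j, k)" "\<And>t. t \<noteq> k \<Longrightarrow> z ! t = y ! t"
  shows "compatible n E z (y, j)"
  unfolding compatible_def read_addr_def
proof (intro allI impI)
  fix t
  assume "(if E (fst (y, j), snd (y, j), t) then None else Some (fst (y, j) ! t)) \<noteq> None"
  then have "\<not> E (y, j, t)"
    by auto
  with assms show "(if E (fst (y, j), snd (y, j), t) then None else Some (fst (y, j) ! t)) = Some (z ! t)"
    by (cases "t = k") auto
qed

lemma finite_Ycycle: "finite (Ycycle n N E)"
  by (rule finite_subset[where B = "reads n N"]) (auto simp: Ycycle_def reads_def finite_addrs)

lemma card_Ycycle_gt_1_if_two_erasures:
  assumes e: "e \<in> cube_edges n" and two: "\<not> card {i \<in> edge_symbols N e. E i} \<le> 1"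
  shows "1 < card (Ycycle n N E)"
proof -
  obtain x k where x: "e = (x, k)" "x \<in> addrs n" "k < n" "\<not> x ! k"
    using e by (auto simp: cube_edges_def)
  define x' where "x' = x[k := True]"
  have "x' ! k"
    using x by (simp add: x'_def addrs_def)
  then have ends: "{x, x'} \<subseteq> addrs n" "x \<noteq> x'"
    using x by (auto simp: addrs_def) (simp add: x'_def)
  have agree: "z ! t = y ! t" if "y \<in> {x, x'}" "z \<in> {x, x'}" "t \<noteq> k" for y z t
    using that by (auto simp: x'_def)
  obtain y1 j1 y2 j2 where i: "(y1, j1, k) \<in> edge_symbols N e" "(y2, j2, k) \<in> edge_symbols N e"
    "E (y1, j1, k)" "E (y2, j2, k)" "(y1, j1) \<noteq> (y2, j2)"
    using two card_le_Suc0_iff_eq[of "{i \<in> edge_symbols N e. E i}"]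
    by (auto simp: edge_symbols_def x)
  then have r: "y1 \<in> {x, x'}" "y2 \<in> {x, x'}" "(y1, j1) \<in> reads n N" "(y2, j2) \<in> reads n N"
    using ends by (auto simp: edge_symbols_def x x'_def reads_def)
  have adj: "gadj n N E (Inl z) (Inr (y, j))" "gadj n N E (Inr (y, j)) (Inl z)"
    if "z \<in> {x, x'}" "(y, j) \<in> {(y1, j1), (y2, j2)}" for z y j
    using that r ends i agree[of y z] compatible_if_erased[of E y j k z n]
    by (auto simp: gadj_def)
  have "is_cycle (gadj n N E) [Inl x, Inr (y1, j1), Inl x', Inr (y2, j2)]"
    using ends i by (intro is_cycle_4 adj) auto
  then have "{(y1, j1), (y2, j2)} \<subseteq> Ycycle n N E"
    using r by (auto simp: Ycycle_def)
  then have "card {(y1, j1), (y2, j2)} \<le> card (Ycycle n N E)"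
    by (rule card_mono[OF finite_Ycycle])
  then show ?thesis
    using i(5) by simp
qed

section \<open>Independence across edges\<close>

lemma measure_pmf_prob_pair_Times:
  "measure_pmf.prob (pair_pmf M1 M2) (A \<times> B) = measure_pmf.prob M1 A * measure_pmf.prob M2 B"
proof -
  have "measure_pmf.prob (pair_pmf M1 M2) (A \<times> B)
      = measure_pmf.prob (pair_pmf M1 M2) ((A \<times> B) \<inter> set_pmf (pair_pmf M1 M2))"
    by (rule measure_Int_set_pmf[symmetric])
  also have "(A \<times> B) \<inter> set_pmf (pair_pmf M1 M2) = (A \<inter> set_pmf M1) \<times> (B \<inter> set_pmf M2)"
    by auto
  also have "measure_pmf.prob (pair_pmf M1 M2) \<dots>
      = measure_pmf.prob M1 (A \<inter> set_pmf M1) * measure_pmf.prob M2 (B \<inter> set_pmf M2)"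
    by (rule measure_pmf_prob_product) (auto intro: countable_subset[OF _ countable_set_pmf])
  finally show ?thesis
    by (simp add: measure_Int_set_pmf)
qed

lemma measure_Pi_pmf_disjoint_blocks:
  fixes G :: "'g \<Rightarrow> 'i set" and P :: "'g \<Rightarrow> ('i \<Rightarrow> 'b) \<Rightarrow> bool"
  assumes "finite K" "\<forall>g\<in>K. finite (G g)" "disjoint_family_on G K"
    "\<forall>g\<in>K. \<forall>f h. (\<forall>i\<in>G g. f i = h i) \<longrightarrow> P g f = P g h"
  shows "measure_pmf.prob (Pi_pmf (\<Union>g\<in>K. G g) d q) {f. \<forall>g\<in>K. P g f}
    = (\<Prod>g\<in>K. measure_pmf.prob (Pi_pmf (G g) d q) {f. P g f})"
  using assms
proof (induction K rule: finite_induct)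
  case empty
  then show ?case by simp
next
  case (insert g K)
  define U where "U = (\<Union>g\<in>K. G g)"
  define mix where "mix = (\<lambda>(f :: 'i \<Rightarrow> 'b, h) i. if i \<in> G g then f i else h i)"
  have disj: "G g \<inter> U = {}"
    using insert.prems(2) insert.hyps(2) unfolding disjoint_family_on_def U_def by fastforce
  have mix_g: "P g (mix (f, h)) = P g f" for f h
    using insert.prems(3) by (auto simp: mix_def)
  have mix_K: "P g' (mix (f, h)) = P g' h" if "g' \<in> K" for g' f h
  proof -
    have "\<forall>i\<in>G g'. mix (f, h) i = h i"
      using disj that by (auto simp: mix_def U_def)
    then show ?thesis
      using insert.prems(3) that by blast
  qed
  have pre: "mix -` {f. \<forall>g'\<in>insert g K. P g' f} = {f. P g f} \<times> {h. \<forall>g'\<in>K. P g' h}"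
    by (intro set_eqI iffI; clarsimp simp: mix_g mix_K)
  have "Pi_pmf (G g \<union> U) d q = map_pmf mix (pair_pmf (Pi_pmf (G g) d q) (Pi_pmf U d q))"
    unfolding mix_def using insert.prems(1) insert.hyps(1) disj
    by (intro Pi_pmf_union) (auto simp: U_def)
  then have "measure_pmf.prob (Pi_pmf (\<Union>g\<in>insert g K. G g) d q) {f. \<forall>g'\<in>insert g K. P g' f}
      = measure_pmf.prob (pair_pmf (Pi_pmf (G g) d q) (Pi_pmf U d q)) ({f. P g f} \<times> {h. \<forall>g'\<in>K. P g' h})"
    by (simp only: U_def UN_insert measure_map_pmf pre)
  also have "\<dots> = measure_pmf.prob (Pi_pmf (G g) d q) {f. P g f} * measure_pmf.prob (Pi_pmf U d q) {h. \<forall>g'\<in>K. P g' h}"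
    by (rule measure_pmf_prob_pair_Times)
  also have "measure_pmf.prob (Pi_pmf U d q) {h. \<forall>g'\<in>K. P g' h}
      = (\<Prod>g\<in>K. measure_pmf.prob (Pi_pmf (G g) d q) {f. P g f})"
    unfolding U_def using insert.prems by (intro insert.IH) (auto simp: disjoint_family_on_def)
  finally show ?case
    using insert.hyps by simp
qed

lemma measure_Pi_bernoulli_card_le_1:
  assumes "finite A" "card A = m" "0 \<le> p" "p \<le> 1"
  shows "measure_pmf.prob (Pi_pmf A d (\<lambda>_. bernoulli_pmf p)) {f. card {i \<in> A. f i} \<le> 1}
    = (1 - p)^m + m * p * (1 - p)^(m - 1)"
proof -
  have "binomial_pmf m p = map_pmf (\<lambda>f. card {i \<in> A. f i}) (Pi_pmf A d (\<lambda>_. bernoulli_pmf p))"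
    using assms by (intro binomial_pmf_altdef') auto
  then have "measure_pmf.prob (Pi_pmf A d (\<lambda>_. bernoulli_pmf p)) {f. card {i \<in> A. f i} \<le> 1}
      = measure_pmf.prob (binomial_pmf m p) {..1}"
    by (simp add: vimage_def)
  also have "\<dots> = sum (pmf (binomial_pmf m p)) {..1}"
    by (rule measure_measure_pmf_finite) simp
  finally show ?thesis
    using assms by (simp add: atMost_Suc)
qed

lemma prob_at_most_one_erasure_per_edge:
  assumes "1 \<le> n" "0 \<le> p" "p \<le> 1"
  shows "measure_pmf.prob (erasure_pmf n N p) {E. \<forall>e\<in>cube_edges n. card {i \<in> edge_symbols N e. E i} \<le> 1}
    = ((1 - p)^(2 * N) + 2 * real N * p * (1 - p)^(2 * N - 1))^(n * 2^(n - 1))"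
proof -
  have "erasure_pmf n N p = Pi_pmf (\<Union>e\<in>cube_edges n. edge_symbols N e) False (\<lambda>_. bernoulli_pmf p)"
    by (simp add: erasure_pmf_def UN_edge_symbols)
  then have "measure_pmf.prob (erasure_pmf n N p) {E. \<forall>e\<in>cube_edges n. card {i \<in> edge_symbols N e. E i} \<le> 1}
      = (\<Prod>e\<in>cube_edges n. measure_pmf.prob (Pi_pmf (edge_symbols N e) False (\<lambda>_. bernoulli_pmf p))
          {f. card {i \<in> edge_symbols N e. f i} \<le> 1})"
  proof (simp only:, intro measure_Pi_pmf_disjoint_blocks)
    show "\<forall>e\<in>cube_edges n. \<forall>f h. (\<forall>i\<in>edge_symbols N e. f i = h i) \<longrightarrow>
        (card {i \<in> edge_symbols N e. f i} \<le> 1) = (card {i \<in> edge_symbols N e. h i} \<le> 1)"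
      by (metis (mono_tags, lifting) Collect_cong)
  qed (simp_all add: finite_cube_edges finite_edge_symbols disjoint_edge_symbols)
  also have "\<dots> = (\<Prod>e\<in>cube_edges n. (1 - p)^(2 * N) + 2 * real N * p * (1 - p)^(2 * N - 1))"
  proof (rule prod.cong[OF refl])
    fix e
    assume "e \<in> cube_edges n"
    then have "measure_pmf.prob (Pi_pmf (edge_symbols N e) False (\<lambda>_. bernoulli_pmf p))
        {f. card {i \<in> edge_symbols N e. f i} \<le> 1} = (1 - p)^(2 * N) + real (2 * N) * p * (1 - p)^(2 * N - 1)"
      using assms by (intro measure_Pi_bernoulli_card_le_1) (auto simp: card_edge_symbols finite_edge_symbols)
    then show "measure_pmf.prob (Pi_pmf (edge_symbols N e) False (\<lambda>_. bernoulli_pmf p))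
        {f. card {i \<in> edge_symbols N e. f i} \<le> 1} = (1 - p)^(2 * N) + 2 * real N * p * (1 - p)^(2 * N - 1)"
      by simp
  qed
  also have "\<dots> = ((1 - p)^(2 * N) + 2 * real N * p * (1 - p)^(2 * N - 1))^(n * 2^(n - 1))"
    using assms by (simp add: card_cube_edges)
  finally show ?thesis .
qed

lemma prob_card_Ycycle_le_1_le:
  assumes "1 \<le> n" "0 \<le> p" "p \<le> 1"
  shows "measure_pmf.prob (erasure_pmf n N p) {E. \<not> 1 < card (Ycycle n N E)}
    \<le> ((1 - p)^(2 * N) + 2 * real N * p * (1 - p)^(2 * N - 1))^(n * 2^(n - 1))"
proof -
  have "{E. \<not> 1 < card (Ycycle n N E)} \<subseteq> {E. \<forall>e\<in>cube_edges n. card {i \<in> edge_symbols N e. E i} \<le> 1}"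
    using card_Ycycle_gt_1_if_two_erasures by blast
  then have "measure_pmf.prob (erasure_pmf n N p) {E. \<not> 1 < card (Ycycle n N E)}
      \<le> measure_pmf.prob (erasure_pmf n N p) {E. \<forall>e\<in>cube_edges n. card {i \<in> edge_symbols N e. E i} \<le> 1}"
    by (rule measure_pmf.finite_measure_mono) simp
  then show ?thesis
    using prob_at_most_one_erasure_per_edge[OF assms] by simp
qed

theorem lemma1:
  fixes n N :: nat and p :: real
  assumes "1 \<le> n" and "1 \<le> N" and "0 < p" and "p < 1"
  shows "measure_pmf.prob (erasure_pmf n N p) {E. card (Ycycle n N E) > 1}
           > 1 - U_cycle n N p / (real N * 2 ^ n * (1 - U_cycle n N p))"
proof -
  let ?q = "((1 - p)^(2 * N) + 2 * real N * p * (1 - p)^(2 * N - 1))^(n * 2^(n - 1))"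
  have "measure_pmf.prob (erasure_pmf n N p) {E. card (Ycycle n N E) > 1}
      = 1 - measure_pmf.prob (erasure_pmf n N p) {E. \<not> 1 < card (Ycycle n N E)}"
    using measure_pmf.prob_compl[of "{E. \<not> 1 < card (Ycycle n N E)}" "erasure_pmf n N p"]
    by (simp add: Compl_eq_Diff_UNIV[symmetric] Collect_neg_eq[symmetric])
  moreover have "measure_pmf.prob (erasure_pmf n N p) {E. \<not> 1 < card (Ycycle n N E)} \<le> ?q"
    using prob_card_Ycycle_le_1_le[of n p N] assms by simp
  moreover have "?q < U_cycle n N p / (real N * 2 ^ n * (1 - U_cycle n N p))"
    by (rule main_ineq_U_cycle[OF assms])
  ultimately show ?thesis
    by linarith
qed

end
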